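(* Let $f=g+h$ where $g:\mathbb{R}^n\to\mathbb{R}$ is $C^1$-smooth with $L$-Lipschitz gradient and $h(x)=\lambda\|x\|_1$ for some $\lambda>0$. Let $S=\arg\min f$, let $\bar x\in S$, $I=\{i:\bar x_i=0\}$ and $\mathcal{M}=\{x:x_i=0\ \forall i\in I\}$, and fix $t>0$. If $0\in\operatorname{ri}\partial f(\bar x)$, then the following are equivalent: (i) there exist $\hat\epsilon,\hat\mu>0$ such that $\hat\mu\,\operatorname{dist}(x,S)\le\|x-\operatorname{prox}_{th}(x-t\nabla g(x))\|$ for all $x\in B_{\hat\epsilon}(\bar x)$; (ii) there exist $\epsilon,\mu>0$ such that $\mu\,\operatorname{dist}(x,S\cap\mathcal{M})\le\|\nabla_{\mathcal{M}}f(x)\|$ for all $x\in B_\epsilon(\bar x)\cap\mathcal{M}$.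
   Context: $\partial f(x)=\nabla g(x)+\lambda\partial\|\cdot\|_1(x)$; $\operatorname{ri}$ is the relative interior; $\operatorname{prox}_{th}(z)=\arg\min_y\{h(y)+\frac1{2t}\|y-z\|^2\}$. $\nabla_{\mathcal M}f(x)$ is the Riemannian gradient of the restriction $f|_{\mathcal M}$ (which is smooth near $\bar x$) with respect to the Euclidean metric on the subspace $\mathcal M$, i.e. the orthogonal projection onto $\mathcal M$ of the gradient of any local smooth extension of $f|_{\mathcal M}$. *)

theory Defs
  imports "HOL-Analysis.Analysis"
begin

definition l1norm :: "real^'n \<Rightarrow> real" where
  "l1norm x = (\<Sum>i\<in>UNIV. \<bar>x $ i\<bar>)"

definition convex_subdiff :: "(real^'n \<Rightarrow> real) \<Rightarrow> real^'n \<Rightarrow> (real^'n) set" where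
  "convex_subdiff \<phi> x = {v. \<forall>y. \<phi> y \<ge> \<phi> x + v \<bullet> (y - x)}"

definition argmin_set :: "('a \<Rightarrow> real) \<Rightarrow> 'a set" where
  "argmin_set F = {x. \<forall>y. F x \<le> F y}"

definition prox :: "real \<Rightarrow> (real^'n \<Rightarrow> real) \<Rightarrow> real^'n \<Rightarrow> real^'n" where
  "prox t h z = (THE y. \<forall>w. h y + (1 / (2 * t)) * (norm (y - z))\<^sup>2
                              \<le> h w + (1 / (2 * t)) * (norm (w - z))\<^sup>2)"

definition active_subspace :: "real^'n \<Rightarrow> (real^'n) set" where
  "active_subspace xbar = {x. \<forall>i. xbar $ i = 0 \<longrightarrow> x $ i = 0}"

definition riem_grad :: "(real^'n) set \<Rightarrow> (real^'n \<Rightarrow> real) \<Rightarrow> real^'n \<Rightarrow> real^'n" where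
  "riem_grad M F x = (THE v. v \<in> M \<and> (F has_derivative (\<lambda>d. v \<bullet> d)) (at x within M))"

end

theory Submission
  imports Defs
begin

text \<open>Near a nondegenerate minimizer xbar the forward-backward step identifies the support
  of xbar and its signs: by stationarity G(xbar)_i = -lam sgn(xbar_i) on the support, the
  relative-interior condition gives |G(xbar)_i| < lam off it, and by continuity of G both
  persist on a ball around xbar. On that ball minimizers lie in M, the restriction of f to M is
  smooth with Riemannian gradient V(x) = P G(x) + lam sgn(xbar) (P the coordinate projection
  onto M), and the prox-gradient residual equals (x - P x) + t V(x), a sum of two orthogonal
  pieces.\<close>

section \<open>Soft thresholding is the proximal map of the l1 norm\<close>

definition soft_threshold :: "real \<Rightarrow> real \<Rightarrow> real" where
  "soft_threshold a z = (if a < z then z - a else if z < - a then z + a else 0)"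

text \<open>Quadratic growth of the scalar prox objective y \<mapsto> 2 a |y| + (y - z)^2 away from the
  soft threshold; it gives minimality and uniqueness of the prox point at once.\<close>
lemma soft_threshold_optimal:
  assumes "a \<ge> 0"
  shows "2 * a * \<bar>soft_threshold a z\<bar> + (soft_threshold a z - z)\<^sup>2 + (y - soft_threshold a z)\<^sup>2
           \<le> 2 * a * \<bar>y\<bar> + (y - z)\<^sup>2"
proof -
  define p where "p = soft_threshold a z"
  have "a * \<bar>p\<bar> - (y - p) * (p - z) \<le> a * \<bar>y\<bar>"
  proof (cases "a < z \<or> z < - a")
    case True
    then show ?thesis
      using assms by (auto simp: p_def soft_threshold_def abs_if algebra_simps
                           intro: mult_nonneg_nonpos mult_nonneg_nonneg)
  next
    case False
    then have "\<bar>z\<bar> \<le> a"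
      by linarith
    have "y * z \<le> \<bar>y\<bar> * \<bar>z\<bar>"
      by (metis abs_ge_self abs_mult)
    also have "\<dots> \<le> \<bar>y\<bar> * a"
      using \<open>\<bar>z\<bar> \<le> a\<close> by (simp add: mult_left_mono)
    finally have "y * z \<le> a * \<bar>y\<bar>"
      by (simp add: mult.commute)
    then show ?thesis
      using False by (simp add: p_def soft_threshold_def)
  qed
  then show ?thesis
    unfolding p_def[symmetric] by (simp add: power2_eq_square algebra_simps)
qed

lemma norm_power2_vec: "(norm (v :: real^'n))\<^sup>2 = (\<Sum>i\<in>UNIV. (v $ i)\<^sup>2)"
  unfolding power2_norm_eq_inner inner_vec_def by (simp add: power2_eq_square)

lemma prox_l1norm:
  assumes "t > 0" "lam > 0"
  shows "prox t (\<lambda>y. lam * l1norm y) z = (\<chi> i. soft_threshold (t * lam) (z $ i))"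
proof -
  define p where "p = (\<chi> i. soft_threshold (t * lam) (z $ i))"
  define \<Phi> where "\<Phi> = (\<lambda>y :: real^'a. lam * l1norm y + (1 / (2 * t)) * (norm (y - z))\<^sup>2)"
  have scaled: "2 * t * \<Phi> y = (\<Sum>i\<in>UNIV. 2 * (t * lam) * \<bar>y $ i\<bar> + (y $ i - z $ i)\<^sup>2)" for y
  proof -
    have "2 * t * \<Phi> y = 2 * t * lam * l1norm y + (norm (y - z))\<^sup>2"
      using assms by (simp add: \<Phi>_def algebra_simps)
    then show ?thesis
      by (simp add: l1norm_def norm_power2_vec sum.distrib sum_distrib_left mult.assoc)
  qed
  have growth: "\<Phi> p + (1 / (2 * t)) * (norm (y - p))\<^sup>2 \<le> \<Phi> y" for y
  proof -
    have "2 * t * \<Phi> p + (norm (y - p))\<^sup>2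
        = (\<Sum>i\<in>UNIV. 2 * (t * lam) * \<bar>p $ i\<bar> + (p $ i - z $ i)\<^sup>2 + (y $ i - p $ i)\<^sup>2)"
      by (simp add: scaled norm_power2_vec sum.distrib)
    also have "\<dots> \<le> 2 * t * \<Phi> y"
      unfolding scaled p_def
      by (rule sum_mono) (use soft_threshold_optimal[of "t * lam"] assms in simp)
    finally show ?thesis
      using assms by (simp add: field_simps)
  qed
  have "(THE y. \<forall>w. \<Phi> y \<le> \<Phi> w) = p"
  proof (rule the_equality)
    show "\<forall>w. \<Phi> p \<le> \<Phi> w"
    proof
      fix w
      have "0 \<le> (1 / (2 * t)) * (norm (w - p))\<^sup>2"
        using assms by simp
      then show "\<Phi> p \<le> \<Phi> w"
        using growth[of w] by linarith
    qed
  next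
    fix q
    assume "\<forall>w. \<Phi> q \<le> \<Phi> w"
    then have "\<Phi> q \<le> \<Phi> p"
      by blast
    then have "(1 / (2 * t)) * (norm (q - p))\<^sup>2 \<le> 0"
      using growth[of q] by linarith
    then show "q = p"
      using assms by (simp add: divide_le_0_iff)
  qed
  then show ?thesis
    unfolding prox_def \<Phi>_def p_def by simp
qed

section \<open>The l1 norm and its subdifferential\<close>

lemma l1norm_add_le: "l1norm (x + y) \<le> l1norm x + l1norm y"
  unfolding l1norm_def by (simp add: sum.distrib[symmetric] sum_mono abs_triangle_ineq)

lemma l1norm_scaleR: "l1norm (c *\<^sub>R x) = \<bar>c\<bar> * l1norm x"
  unfolding l1norm_def by (simp add: abs_mult sum_distrib_left)

lemma l1norm_axis: "l1norm (axis i c :: real^'n) = \<bar>c\<bar>"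
proof -
  have "(\<lambda>j. \<bar>(axis i c :: real^'n) $ j\<bar>) = (\<lambda>j. if j = i then \<bar>c\<bar> else 0)"
    by (auto simp: axis_def)
  then show ?thesis
    unfolding l1norm_def by (simp only: \<open>(\<lambda>j. _) = _\<close>) simp
qed

lemma l1norm_add_axis:
  fixes y :: "real^'n"
  assumes "\<bar>s\<bar> < \<bar>y $ i\<bar>"
  shows "l1norm (y + s *\<^sub>R axis i 1) = l1norm y + sgn (y $ i) * s"
proof -
  have "l1norm (y + s *\<^sub>R axis i 1) = (\<Sum>j\<in>UNIV. \<bar>y $ j\<bar> + (if j = i then sgn (y $ i) * s else 0))"
    unfolding l1norm_def
    by (rule sum.cong) (use assms in \<open>auto simp: axis_def sgn_if abs_if\<close>)
  then show ?thesis
    by (simp add: sum.distrib l1norm_def)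
qed

lemma inner_le_l1norm:
  fixes v y :: "real^'n"
  assumes "\<forall>j. \<bar>v $ j\<bar> \<le> 1"
  shows "v \<bullet> y \<le> l1norm y"
  unfolding inner_vec_def l1norm_def
proof (rule sum_mono)
  fix j
  have "v $ j * y $ j \<le> \<bar>v $ j\<bar> * \<bar>y $ j\<bar>"
    by (metis abs_ge_self abs_mult)
  also have "\<dots> \<le> \<bar>y $ j\<bar>"
    using assms mult_right_mono[of "\<bar>v $ j\<bar>" 1 "\<bar>y $ j\<bar>"] by simp
  finally show "v $ j \<bullet> y $ j \<le> \<bar>y $ j\<bar>"
    by simp
qed

lemma convex_subdiff_l1norm_iff:
  "v \<in> convex_subdiff l1norm x \<longleftrightarrow> v \<bullet> x = l1norm x \<and> (\<forall>j. \<bar>v $ j\<bar> \<le> 1)"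
proof
  assume "v \<in> convex_subdiff l1norm x"
  then have sub: "l1norm x + v \<bullet> (y - x) \<le> l1norm y" for y
    by (simp add: convex_subdiff_def)
  have "l1norm x \<le> v \<bullet> x"
    using sub[of 0] by (simp add: l1norm_def)
  moreover have "v \<bullet> x \<le> l1norm x"
    using sub[of "2 *\<^sub>R x"] by (simp add: l1norm_scaleR inner_diff_right)
  moreover have "\<bar>v $ j\<bar> \<le> 1" for j
  proof -
    have "l1norm x + c * v $ j \<le> l1norm x + \<bar>c\<bar>" for c
      using sub[of "x + axis j c"] l1norm_add_le[of x "axis j c"]
      by (simp add: l1norm_axis inner_axis mult.commute)
    from this[of 1] this[of "-1"] show ?thesis
      by simp
  qed
  ultimately show "v \<bullet> x = l1norm x \<and> (\<forall>j. \<bar>v $ j\<bar> \<le> 1)"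
    by auto
next
  assume "v \<bullet> x = l1norm x \<and> (\<forall>j. \<bar>v $ j\<bar> \<le> 1)"
  then show "v \<in> convex_subdiff l1norm x"
    unfolding convex_subdiff_def using inner_le_l1norm[of v] by (auto simp: inner_diff_right)
qed

lemma convex_subdiff_l1norm_update:
  assumes "w \<in> convex_subdiff l1norm x" "x $ i = 0" "\<bar>a\<bar> \<le> 1"
  shows "(\<chi> j. if j = i then a else w $ j) \<in> convex_subdiff l1norm x"
proof -
  have "(\<chi> j. if j = i then a else w $ j) \<bullet> x = w \<bullet> x"
    unfolding inner_vec_def by (rule sum.cong) (auto simp: assms(2))
  then show ?thesis
    using assms by (auto simp: convex_subdiff_l1norm_iff)
qed

lemma rel_interior_prolong:
  fixes S :: "'a::euclidean_space set"
  assumes "x \<in> rel_interior S" "y \<in> S"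
  obtains e where "e > 0" "x - e *\<^sub>R (y - x) \<in> S"
proof -
  obtain r where r: "r > 0" "ball x r \<inter> affine hull S \<subseteq> S"
    using assms(1) mem_rel_interior_ball by blast
  define d where "d = norm (y - x)"
  have d: "d \<ge> 0"
    by (simp add: d_def)
  define e where "e = r / (2 * (d + 1))"
  have e: "e > 0"
    unfolding e_def using r d by (intro divide_pos_pos) auto
  have "r * d < r * (2 * (d + 1))"
    using r d by (intro mult_strict_left_mono) auto
  then have close: "e * d < r"
    using d by (simp add: e_def pos_divide_less_eq)
  have "x - e *\<^sub>R (y - x) = (1 + e) *\<^sub>R x + (- e) *\<^sub>R y"
    by (simp add: algebra_simps)
  also have "\<dots> \<in> affine hull S"
    using assms rel_interior_subset by (intro mem_affine) (auto intro: hull_inc)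
  finally have "x - e *\<^sub>R (y - x) \<in> affine hull S" .
  moreover have "x - e *\<^sub>R (y - x) \<in> ball x r"
    using e close by (simp add: dist_norm d_def)
  ultimately show thesis
    using that e r by blast
qed

text \<open>If the w with u + lam w = 0 had |w_i| = 1, then (as x_i = 0) flipping the sign of w_i
  would stay in the subdifferential and give a segment in the image ending at 0, which could not
  be prolonged beyond its end point 0.\<close>
lemma abs_less_of_rel_interior_subdiff:
  fixes u x :: "real^'n"
  assumes ri: "0 \<in> rel_interior ((\<lambda>v. u + lam *\<^sub>R v) ` convex_subdiff l1norm x)"
    and lam: "lam > 0" and xi: "x $ i = 0"
  shows "\<bar>u $ i\<bar> < lam"
proof -
  define T where "T = (\<lambda>v. u + lam *\<^sub>R v) ` convex_subdiff l1norm x"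
  have "0 \<in> T"
    using ri rel_interior_subset unfolding T_def by blast
  then obtain w where w: "w \<in> convex_subdiff l1norm x" "0 = u + lam *\<^sub>R w"
    unfolding T_def by (rule imageE)
  then have "(u + lam *\<^sub>R w) $ i = 0"
    by simp
  then have ui: "u $ i = - lam * w $ i"
    by simp
  have "\<bar>w $ i\<bar> \<noteq> 1"
  proof
    assume wi: "\<bar>w $ i\<bar> = 1"
    define w' where "w' = (\<chi> j. if j = i then - w $ i else w $ j)"
    have "u + lam *\<^sub>R w' \<in> T"
      unfolding T_def w'_def
      by (rule imageI) (use convex_subdiff_l1norm_update[OF w(1) xi, of "- w $ i"] wi in simp)
    then obtain e where e: "e > 0" "0 - e *\<^sub>R (u + lam *\<^sub>R w' - 0) \<in> T"
      using rel_interior_prolong ri unfolding T_def by blast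
    then have "- e *\<^sub>R (u + lam *\<^sub>R w') \<in> T"
      by simp
    then obtain v where v: "v \<in> convex_subdiff l1norm x" "- e *\<^sub>R (u + lam *\<^sub>R w') = u + lam *\<^sub>R v"
      unfolding T_def by (rule imageE)
    then have "(- e *\<^sub>R (u + lam *\<^sub>R w')) $ i = (u + lam *\<^sub>R v) $ i"
      by simp
    then have "lam * v $ i = lam * ((1 + 2 * e) * w $ i)"
      using ui by (simp add: w'_def algebra_simps)
    then have "\<bar>v $ i\<bar> = 1 + 2 * e"
      using lam wi e(1) by (simp add: abs_mult)
    moreover have "\<bar>v $ i\<bar> \<le> 1"
      using v(1) by (simp add: convex_subdiff_l1norm_iff)
    ultimately show False
      using e(1) by simp
  qed
  moreover have "\<bar>w $ i\<bar> \<le> 1"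
    using w(1) by (simp add: convex_subdiff_l1norm_iff)
  ultimately show ?thesis
    using ui lam by (simp add: abs_mult)
qed

lemma argmin_l1_stationary_coordinate:
  fixes g :: "real^'n \<Rightarrow> real"
  assumes grad: "(g has_derivative (\<lambda>d. u \<bullet> d)) (at y)"
    and y: "y \<in> argmin_set (\<lambda>x. g x + lam * l1norm x)" and yi: "y $ i \<noteq> 0"
  shows "u $ i + lam * sgn (y $ i) = 0"
proof -
  define \<phi> where "\<phi> = (\<lambda>s. g (y + s *\<^sub>R axis i 1) + lam * (l1norm y + sgn (y $ i) * s))"
  have "((\<lambda>s. y + s *\<^sub>R axis i 1) has_derivative (\<lambda>s. s *\<^sub>R axis i 1)) (at 0)"
    by (auto intro!: derivative_eq_intros)
  moreover have "(g has_derivative (\<lambda>d. u \<bullet> d)) (at ((\<lambda>s. y + s *\<^sub>R axis i 1) 0))"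
    using grad by simp
  ultimately have "((\<lambda>s. g (y + s *\<^sub>R axis i 1)) has_derivative (\<lambda>s. u \<bullet> (s *\<^sub>R axis i 1))) (at 0)"
    by (rule has_derivative_compose)
  moreover have "(\<lambda>s. u \<bullet> (s *\<^sub>R axis i 1)) = (*) (u $ i)"
    by (auto simp: inner_axis)
  ultimately have "((\<lambda>s. g (y + s *\<^sub>R axis i 1)) has_real_derivative u $ i) (at 0)"
    by (simp add: has_field_derivative_def)
  then have "(\<phi> has_real_derivative u $ i + lam * sgn (y $ i)) (at 0)"
    unfolding \<phi>_def by (auto intro!: derivative_eq_intros)
  moreover have "\<phi> 0 \<le> \<phi> s" if "\<bar>0 - s\<bar> < \<bar>y $ i\<bar>" for s
  proof -
    have "g y + lam * l1norm y \<le> g (y + s *\<^sub>R axis i 1) + lam * l1norm (y + s *\<^sub>R axis i 1)"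
      using y by (simp add: argmin_set_def)
    then show ?thesis
      using l1norm_add_axis[of s y i] that by (simp add: \<phi>_def)
  qed
  ultimately show ?thesis
    using yi by (intro DERIV_local_min[of \<phi> _ 0 "\<bar>y $ i\<bar>"]) auto
qed

lemma closed_argmin_set:
  fixes F :: "'a::topological_space \<Rightarrow> real"
  assumes "continuous_on UNIV F"
  shows "closed (argmin_set F)"
  unfolding argmin_set_def
  by (intro closed_Collect_all closed_Collect_le assms continuous_on_const)

section \<open>The active subspace and the Riemannian gradient\<close>

definition active_proj :: "real^'n \<Rightarrow> real^'n \<Rightarrow> real^'n" where
  "active_proj xbar z = (\<chi> i. if xbar $ i = 0 then 0 else z $ i)"

lemma active_proj_in_active_subspace: "active_proj xbar z \<in> active_subspace xbar"
  by (simp add: active_proj_def active_subspace_def)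

lemma active_proj_id: "z \<in> active_subspace xbar \<Longrightarrow> active_proj xbar z = z"
  by (auto simp: active_proj_def active_subspace_def vec_eq_iff)

lemma active_proj_diff: "active_proj xbar (x - y) = active_proj xbar x - active_proj xbar y"
  by (simp add: active_proj_def vec_eq_iff)

lemma inner_active_proj: "active_proj xbar u \<bullet> d = u \<bullet> active_proj xbar d"
  unfolding inner_vec_def by (rule sum.cong) (auto simp: active_proj_def)

lemma norm_active_proj_le: "norm (active_proj xbar z) \<le> norm z"
  by (rule norm_le_componentwise_cart) (simp add: active_proj_def)

lemma norm_diff_active_proj_le: "norm (z - active_proj xbar z) \<le> norm z"
  by (rule norm_le_componentwise_cart) (simp add: active_proj_def)

lemma self_in_active_subspace: "xbar \<in> active_subspace xbar"
  by (simp add: active_subspace_def)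

lemma dist_active_proj_le: "dist (active_proj xbar x) xbar \<le> dist x xbar"
  using norm_active_proj_le[of xbar "x - xbar"]
  by (simp add: dist_norm active_proj_diff active_proj_id[OF self_in_active_subspace])

lemma bounded_linear_active_proj: "bounded_linear (active_proj xbar)"
proof (rule bounded_linear_intro[where K = 1])
  show "active_proj xbar (x + y) = active_proj xbar x + active_proj xbar y" for x y
    by (simp add: active_proj_def vec_eq_iff)
  show "active_proj xbar (r *\<^sub>R x) = r *\<^sub>R active_proj xbar x" for r x
    by (simp add: active_proj_def vec_eq_iff)
  show "norm (active_proj xbar x) \<le> norm x * 1" for x
    using norm_active_proj_le by simp
qed

lemma subspace_active_subspace: "subspace (active_subspace xbar)"
  unfolding subspace_def active_subspace_def by auto

lemma has_derivative_within_subspace_unique: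
  fixes F :: "real^'n \<Rightarrow> real"
  assumes M: "subspace M" and y: "y \<in> M" and vw: "v \<in> M" "w \<in> M"
    and dv: "(F has_derivative (\<lambda>d. v \<bullet> d)) (at y within M)"
    and dw: "(F has_derivative (\<lambda>d. w \<bullet> d)) (at y within M)"
  shows "v = w"
proof -
  define \<psi> where "\<psi> = (\<lambda>s::real. y + s *\<^sub>R (v - w))"
  have line: "\<psi> ` UNIV \<subseteq> M"
    using M y vw unfolding \<psi>_def by (auto intro!: subspace_add subspace_scale subspace_diff)
  have d\<psi>: "(\<psi> has_derivative (\<lambda>s. s *\<^sub>R (v - w))) (at 0 within UNIV)"
    unfolding \<psi>_def by (auto intro!: derivative_eq_intros)
  have "\<psi> 0 = y"
    by (simp add: \<psi>_def)
  then have "((F \<circ> \<psi>) has_derivative (\<lambda>d. v \<bullet> d) \<circ> (\<lambda>s. s *\<^sub>R (v - w))) (at 0)"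
    and "((F \<circ> \<psi>) has_derivative (\<lambda>d. w \<bullet> d) \<circ> (\<lambda>s. s *\<^sub>R (v - w))) (at 0)"
    using diff_chain_within[OF d\<psi>, of F] has_derivative_subset[OF dv line]
      has_derivative_subset[OF dw line] by simp_all
  then have "(\<lambda>d. v \<bullet> d) \<circ> (\<lambda>s. s *\<^sub>R (v - w)) = (\<lambda>d. w \<bullet> d) \<circ> (\<lambda>s. s *\<^sub>R (v - w))"
    by (rule has_derivative_unique)
  from fun_cong[OF this, of 1] have "v \<bullet> (v - w) = w \<bullet> (v - w)"
    by simp
  then have "(v - w) \<bullet> (v - w) = 0"
    by (simp add: inner_diff_left)
  then show ?thesis
    by simp
qed

lemma riem_grad_eqI:
  assumes "subspace M" "y \<in> M" "v \<in> M" "(F has_derivative (\<lambda>d. v \<bullet> d)) (at y within M)"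
  shows "riem_grad M F y = v"
  unfolding riem_grad_def
  using assms has_derivative_within_subspace_unique[OF assms(1,2)] by blast

text \<open>H composed with the projection onto M agrees with F near y on M and has gradient P u.\<close>
lemma riem_grad_active_subspace:
  fixes F H :: "real^'n \<Rightarrow> real"
  assumes H: "(H has_derivative (\<lambda>d. u \<bullet> d)) (at y)"
    and y: "y \<in> active_subspace xbar" and r: "r > 0"
    and FH: "\<And>z. z \<in> active_subspace xbar \<Longrightarrow> dist z y < r \<Longrightarrow> F z = H z"
  shows "riem_grad (active_subspace xbar) F y = active_proj xbar u"
proof (rule riem_grad_eqI[OF subspace_active_subspace y active_proj_in_active_subspace])
  have "((\<lambda>z. H (active_proj xbar z)) has_derivative (\<lambda>d. u \<bullet> active_proj xbar d)) (at y)"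
    using has_derivative_compose[OF bounded_linear_imp_has_derivative[OF bounded_linear_active_proj]]
      H active_proj_id[OF y] by metis
  then have "((\<lambda>z. H (active_proj xbar z)) has_derivative (\<lambda>d. active_proj xbar u \<bullet> d))
      (at y within active_subspace xbar)"
    by (simp add: inner_active_proj has_derivative_at_withinI)
  then show "(F has_derivative (\<lambda>d. active_proj xbar u \<bullet> d)) (at y within active_subspace xbar)"
    by (rule has_derivative_transform_within[OF _ r y]) (simp add: FH active_proj_id)
qed

section \<open>Identification of the active subspace\<close>

locale l1_regularized =
  fixes g :: "real^'n \<Rightarrow> real" and G :: "real^'n \<Rightarrow> real^'n"
    and L lam t :: real and xbar :: "real^'n"
  assumes grad: "\<forall>x. (g has_derivative (\<lambda>d. G x \<bullet> d)) (at x)"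
    and lip: "\<forall>x y. norm (G x - G y) \<le> L * norm (x - y)"
    and lam_pos: "lam > 0"
    and t_pos: "t > 0"
    and xbar_min: "xbar \<in> argmin_set (\<lambda>x. g x + lam * l1norm x)"
    and nondegenerate: "0 \<in> rel_interior ((\<lambda>v. G xbar + lam *\<^sub>R v) ` convex_subdiff l1norm xbar)"
begin

abbreviation minimizers :: "(real^'n) set" where
  "minimizers \<equiv> argmin_set (\<lambda>x. g x + lam * l1norm x)"

abbreviation prox_residual :: "real^'n \<Rightarrow> real^'n" where
  "prox_residual x \<equiv> x - prox t (\<lambda>y. lam * l1norm y) (x - t *\<^sub>R G x)"

definition sign_vec :: "real^'n" where
  "sign_vec = (\<chi> i. sgn (xbar $ i))"

definition reduced_grad :: "real^'n \<Rightarrow> real^'n" where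
  "reduced_grad y = active_proj xbar (G y) + lam *\<^sub>R sign_vec"

text \<open>The forward step z - t G z keeps the signs of xbar on its support and falls into the
  dead zone [-t lam, t lam] of soft thresholding off it; the bound |G z_i| < lam off the
  support keeps minimizers near xbar inside M.\<close>
definition identifies_support :: "real^'n \<Rightarrow> bool" where
  "identifies_support z \<longleftrightarrow> (\<forall>i. if xbar $ i = 0
      then \<bar>G z $ i\<bar> < lam \<and> \<bar>z $ i - t * G z $ i\<bar> < t * lam
      else 0 < sgn (xbar $ i) * z $ i \<and> t * lam < sgn (xbar $ i) * (z $ i - t * G z $ i))"

lemma norm_G_diff_le: "norm (G x - G y) \<le> \<bar>L\<bar> * norm (x - y)"
proof -
  have "norm (G x - G y) \<le> L * norm (x - y)"
    using lip by blast
  also have "\<dots> \<le> \<bar>L\<bar> * norm (x - y)"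
    by (simp add: mult_right_mono)
  finally show ?thesis .
qed

lemma continuous_on_G: "continuous_on UNIV G"
proof (rule lipschitz_on_continuous_on)
  show "\<bar>L\<bar>-lipschitz_on UNIV G"
    using norm_G_diff_le by (intro lipschitz_onI) (simp_all add: dist_norm)
qed

lemma closed_minimizers: "closed minimizers"
proof (rule closed_argmin_set)
  have "continuous_on UNIV g"
    using grad by (intro continuous_at_imp_continuous_on) (blast intro: has_derivative_continuous)
  moreover have "continuous_on UNIV (l1norm :: real^'n \<Rightarrow> real)"
    unfolding l1norm_def
    by (intro continuous_on_sum continuous_on_rabs continuous_on_component continuous_on_id)
  ultimately show "continuous_on UNIV (\<lambda>x. g x + lam * l1norm x)"
    by (intro continuous_on_add continuous_on_mult continuous_on_const) auto
qed

lemma eventually_identifies_support: "\<forall>\<^sub>F z in nhds xbar. identifies_support z"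
proof -
  have G: "(G \<longlongrightarrow> G xbar) (nhds xbar)"
    using continuous_on_G by (intro isCont_tendsto_compose[OF _ filterlim_ident])
      (simp add: continuous_on_eq_continuous_at)
  have "\<forall>\<^sub>F z in nhds xbar. if xbar $ i = 0
      then \<bar>G z $ i\<bar> < lam \<and> \<bar>z $ i - t * G z $ i\<bar> < t * lam
      else 0 < sgn (xbar $ i) * z $ i \<and> t * lam < sgn (xbar $ i) * (z $ i - t * G z $ i)" for i
  proof (cases "xbar $ i = 0")
    case True
    have bound: "\<bar>G xbar $ i\<bar> < lam"
      using abs_less_of_rel_interior_subdiff[OF nondegenerate lam_pos True] .
    have "((\<lambda>z. \<bar>G z $ i\<bar>) \<longlongrightarrow> \<bar>G xbar $ i\<bar>) (nhds xbar)"
      by (intro tendsto_intros G)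
    then have "\<forall>\<^sub>F z in nhds xbar. \<bar>G z $ i\<bar> < lam"
      using bound by (rule order_tendstoD(2))
    moreover have "\<forall>\<^sub>F z in nhds xbar. \<bar>z $ i - t * G z $ i\<bar> < t * lam"
    proof (rule order_tendstoD(2))
      show "((\<lambda>z. \<bar>z $ i - t * G z $ i\<bar>) \<longlongrightarrow> \<bar>xbar $ i - t * G xbar $ i\<bar>) (nhds xbar)"
        by (intro tendsto_intros G filterlim_ident)
      show "\<bar>xbar $ i - t * G xbar $ i\<bar> < t * lam"
        using bound True t_pos by (simp add: abs_mult)
    qed
    ultimately show ?thesis
      using True by (simp add: eventually_conj)
  next
    case False
    then have "G xbar $ i + lam * sgn (xbar $ i) = 0"
      using argmin_l1_stationary_coordinate grad xbar_min by blast
    then have "G xbar $ i = - lam * sgn (xbar $ i)"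
      by linarith
    then have "sgn (xbar $ i) * (xbar $ i - t * G xbar $ i) = \<bar>xbar $ i\<bar> + t * lam"
      using False by (auto simp: sgn_if algebra_simps)
    then have above: "t * lam < sgn (xbar $ i) * (xbar $ i - t * G xbar $ i)"
      using False by simp
    have pos: "0 < sgn (xbar $ i) * xbar $ i"
      using False by (auto simp: sgn_if)
    have "((\<lambda>z. sgn (xbar $ i) * z $ i) \<longlongrightarrow> sgn (xbar $ i) * xbar $ i) (nhds xbar)"
      by (intro tendsto_intros filterlim_ident)
    then have "\<forall>\<^sub>F z in nhds xbar. 0 < sgn (xbar $ i) * z $ i"
      using pos by (rule order_tendstoD(1))
    moreover have "((\<lambda>z. sgn (xbar $ i) * (z $ i - t * G z $ i))
        \<longlongrightarrow> sgn (xbar $ i) * (xbar $ i - t * G xbar $ i)) (nhds xbar)"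
      by (intro tendsto_intros G filterlim_ident)
    then have "\<forall>\<^sub>F z in nhds xbar. t * lam < sgn (xbar $ i) * (z $ i - t * G z $ i)"
      using above by (rule order_tendstoD(1))
    ultimately show ?thesis
      using False by (simp add: eventually_conj)
  qed
  then show ?thesis
    unfolding identifies_support_def by (rule eventually_all_finite)
qed

lemma identifying_ballE:
  obtains \<delta> where "\<delta> > 0" "\<forall>z\<in>ball xbar \<delta>. identifies_support z"
  using eventually_identifies_support unfolding eventually_nhds_metric
  by (metis dist_commute mem_ball)

lemma l1norm_eq_inner_sign_vec:
  assumes "identifies_support z" "z \<in> active_subspace xbar"
  shows "l1norm z = sign_vec \<bullet> z"
  unfolding l1norm_def inner_vec_def
proof (rule sum.cong)
  fix i
  have "xbar $ i \<noteq> 0 \<Longrightarrow> 0 < sgn (xbar $ i) * z $ i"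
    using assms(1) unfolding identifies_support_def by (metis (full_types))
  then show "\<bar>z $ i\<bar> = sign_vec $ i \<bullet> z $ i"
    using assms(2) by (auto simp: active_subspace_def sign_vec_def sgn_if abs_if)
qed simp

lemma minimizer_in_active_subspace:
  assumes "s \<in> minimizers" "identifies_support s"
  shows "s \<in> active_subspace xbar"
  unfolding active_subspace_def
proof (intro CollectI allI impI)
  fix i
  assume xi: "xbar $ i = 0"
  show "s $ i = 0"
  proof (rule ccontr)
    assume si: "s $ i \<noteq> 0"
    then have "G s $ i + lam * sgn (s $ i) = 0"
      using argmin_l1_stationary_coordinate grad assms(1) by blast
    then have "\<bar>G s $ i\<bar> = lam"
      using lam_pos si by (cases "s $ i > 0") (auto simp: sgn_if)
    moreover have "\<bar>G s $ i\<bar> < lam"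
      using assms(2) xi unfolding identifies_support_def by (metis (full_types))
    ultimately show False
      by simp
  qed
qed

lemma prox_residual_eq:
  assumes "identifies_support z"
  shows "prox_residual z = (z - active_proj xbar z) + t *\<^sub>R reduced_grad z"
  unfolding prox_l1norm[OF t_pos lam_pos] vec_eq_iff
proof
  fix i
  have supp: "if xbar $ i = 0
      then \<bar>z $ i - t * G z $ i\<bar> < t * lam
      else t * lam < sgn (xbar $ i) * (z $ i - t * G z $ i)"
    using assms unfolding identifies_support_def by (metis (full_types))
  consider "xbar $ i = 0" | "xbar $ i > 0" | "xbar $ i < 0"
    by linarith
  then show "(z - (\<chi> i. soft_threshold (t * lam) ((z - t *\<^sub>R G z) $ i))) $ i
      = (z - active_proj xbar z + t *\<^sub>R reduced_grad z) $ i"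
    by cases (use supp mult_pos_pos[OF lam_pos t_pos] in \<open>auto simp: soft_threshold_def active_proj_def reduced_grad_def
                 sign_vec_def algebra_simps\<close>)
qed

lemma riem_grad_eq_reduced_grad:
  assumes supp: "\<forall>z\<in>ball xbar \<delta>. identifies_support z"
    and y: "y \<in> ball xbar \<delta> \<inter> active_subspace xbar"
  shows "riem_grad (active_subspace xbar) (\<lambda>x. g x + lam * l1norm x) y = reduced_grad y"
proof -
  have "((\<lambda>z. g z + lam * (sign_vec \<bullet> z)) has_derivative
      (\<lambda>d. G y \<bullet> d + lam * (sign_vec \<bullet> d))) (at y)"
    using grad by (auto intro!: derivative_eq_intros)
  then have "((\<lambda>z. g z + lam * (sign_vec \<bullet> z)) has_derivative
      (\<lambda>d. (G y + lam *\<^sub>R sign_vec) \<bullet> d)) (at y)"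
    by (simp add: inner_add_left)
  moreover have "active_proj xbar (G y + lam *\<^sub>R sign_vec) = reduced_grad y"
    by (simp add: reduced_grad_def active_proj_def sign_vec_def vec_eq_iff)
  moreover have "g z + lam * l1norm z = g z + lam * (sign_vec \<bullet> z)"
    if "z \<in> active_subspace xbar" "dist z y < \<delta> - dist y xbar" for z
  proof -
    have "z \<in> ball xbar \<delta>"
      using that dist_triangle[of xbar z y] by (simp add: dist_commute)
    then show ?thesis
      using supp that(1) l1norm_eq_inner_sign_vec by simp
  qed
  ultimately show ?thesis
    using y riem_grad_active_subspace[of _ "G y + lam *\<^sub>R sign_vec" y xbar "\<delta> - dist y xbar"]
    by (simp add: dist_commute)
qed

abbreviation prox_error_bound :: bool where
  "prox_error_bound \<equiv> \<exists>\<epsilon> \<mu>. \<epsilon> > 0 \<and> \<mu> > 0 \<and>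
     (\<forall>x\<in>ball xbar \<epsilon>. \<mu> * infdist x minimizers \<le> norm (prox_residual x))"

abbreviation riem_error_bound :: bool where
  "riem_error_bound \<equiv> \<exists>\<epsilon> \<mu>. \<epsilon> > 0 \<and> \<mu> > 0 \<and>
     (\<forall>x\<in>ball xbar \<epsilon> \<inter> active_subspace xbar.
        \<mu> * infdist x (minimizers \<inter> active_subspace xbar)
          \<le> norm (riem_grad (active_subspace xbar) (\<lambda>x. g x + lam * l1norm x) x))"

text \<open>A nearest minimizer of a point of M close to xbar lies in M, and on M the residual is
  t times the Riemannian gradient.\<close>
lemma riem_error_bound_if_prox_error_bound:
  assumes prox_error_bound
  shows riem_error_bound
proof -
  obtain \<epsilon> \<mu> where \<epsilon>: "\<epsilon> > 0" and \<mu>: "\<mu> > 0"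
    and bound: "\<forall>x\<in>ball xbar \<epsilon>. \<mu> * infdist x minimizers \<le> norm (prox_residual x)"
    using assms by blast
  obtain \<delta> where \<delta>: "\<delta> > 0" and supp: "\<forall>z\<in>ball xbar \<delta>. identifies_support z"
    by (rule identifying_ballE)
  have "\<mu> / t * infdist x (minimizers \<inter> active_subspace xbar)
      \<le> norm (riem_grad (active_subspace xbar) (\<lambda>x. g x + lam * l1norm x) x)"
    if x: "x \<in> ball xbar (min \<epsilon> (\<delta> / 2)) \<inter> active_subspace xbar" for x
  proof -
    have x_\<delta>: "x \<in> ball xbar \<delta> \<inter> active_subspace xbar"
      using x \<delta> by auto
    obtain s where s: "s \<in> minimizers" "infdist x minimizers = dist x s"
      using infdist_attains_inf[OF closed_minimizers, of x] xbar_min by blast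
    have "dist x s \<le> dist x xbar"
      using infdist_le[OF xbar_min, of x] s by simp
    then have "s \<in> ball xbar \<delta>"
      using x dist_triangle[of xbar s x] by (simp add: dist_commute)
    then have "s \<in> minimizers \<inter> active_subspace xbar"
      using minimizer_in_active_subspace s(1) supp by blast
    then have "\<mu> * infdist x (minimizers \<inter> active_subspace xbar) \<le> \<mu> * infdist x minimizers"
      using s(2) \<mu> by (simp add: infdist_le)
    also have "\<dots> \<le> norm (prox_residual x)"
      using bound x by simp
    also have "prox_residual x = (x - active_proj xbar x) + t *\<^sub>R reduced_grad x"
      using supp x_\<delta> by (intro prox_residual_eq) auto
    also have "\<dots> = t *\<^sub>R reduced_grad x"
      using active_proj_id[of x xbar] x by simp
    also have "reduced_grad x = riem_grad (active_subspace xbar) (\<lambda>x. g x + lam * l1norm x) x"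
      using riem_grad_eq_reduced_grad[OF supp x_\<delta>] by simp
    finally show ?thesis
      using t_pos by (simp add: field_simps)
  qed
  then show ?thesis
    using \<epsilon> \<delta> \<mu> t_pos by (intro exI[of _ "min \<epsilon> (\<delta> / 2)"] exI[of _ "\<mu> / t"]) auto
qed

lemma norm_prox_residual_ge:
  assumes "identifies_support x"
  shows "norm (x - active_proj xbar x) \<le> norm (prox_residual x)"
    and "t * norm (reduced_grad x) \<le> norm (prox_residual x)"
proof -
  have res: "prox_residual x = (x - active_proj xbar x) + t *\<^sub>R reduced_grad x"
    using assms by (rule prox_residual_eq)
  have proj_res: "active_proj xbar (prox_residual x) = t *\<^sub>R reduced_grad x"
    by (simp add: res active_proj_def reduced_grad_def sign_vec_def vec_eq_iff)
  have "x - active_proj xbar x = prox_residual x - active_proj xbar (prox_residual x)"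
    unfolding proj_res using res by (metis add_diff_cancel)
  then show "norm (x - active_proj xbar x) \<le> norm (prox_residual x)"
    by (metis norm_diff_active_proj_le)
  have "norm (t *\<^sub>R reduced_grad x) \<le> norm (prox_residual x)"
    unfolding proj_res[symmetric] by (rule norm_active_proj_le)
  then show "t * norm (reduced_grad x) \<le> norm (prox_residual x)"
    using t_pos by simp
qed

lemma norm_reduced_grad_diff_le: "norm (reduced_grad y - reduced_grad x) \<le> \<bar>L\<bar> * norm (y - x)"
proof -
  have "norm (reduced_grad y - reduced_grad x) \<le> norm (G y - G x)"
    using norm_active_proj_le[of xbar "G y - G x"] by (simp add: reduced_grad_def active_proj_diff)
  also have "\<dots> \<le> \<bar>L\<bar> * norm (y - x)"
    by (rule norm_G_diff_le)
  finally show ?thesis .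
qed

text \<open>The residual at x controls both the distance from x to its projection y onto M and the
  reduced gradient at x, which differs from the one at y by at most |L| |x - y|.\<close>
lemma prox_error_bound_if_riem_error_bound:
  assumes riem_error_bound
  shows prox_error_bound
proof -
  obtain \<epsilon> \<mu> where \<epsilon>: "\<epsilon> > 0" and \<mu>: "\<mu> > 0"
    and bound: "\<forall>x\<in>ball xbar \<epsilon> \<inter> active_subspace xbar.
        \<mu> * infdist x (minimizers \<inter> active_subspace xbar)
          \<le> norm (riem_grad (active_subspace xbar) (\<lambda>x. g x + lam * l1norm x) x)"
    using assms by blast
  obtain \<delta> where \<delta>: "\<delta> > 0" and supp: "\<forall>z\<in>ball xbar \<delta>. identifies_support z"
    by (rule identifying_ballE)
  define K where "K = \<bar>L\<bar> + 1 / t"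
  define C where "C = 1 + K / \<mu>"
  have C: "C > 0"
    using \<mu> t_pos by (simp add: C_def K_def add_pos_nonneg)
  have "infdist x minimizers \<le> C * norm (prox_residual x)"
    if x: "x \<in> ball xbar (min \<epsilon> \<delta>)" for x
  proof -
    define y where "y = active_proj xbar x"
    define R where "R = norm (prox_residual x)"
    have "identifies_support x"
      using supp x by simp
    then have xy: "norm (x - y) \<le> R" and "t * norm (reduced_grad x) \<le> R"
      using norm_prox_residual_ge by (simp_all add: y_def R_def)
    then have "norm (reduced_grad x) \<le> R / t"
      using t_pos by (simp add: pos_le_divide_eq mult.commute)
    moreover have "\<bar>L\<bar> * norm (y - x) \<le> \<bar>L\<bar> * R"
      using xy by (simp add: mult_left_mono norm_minus_commute)
    ultimately have "norm (reduced_grad y) \<le> K * R"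
      using norm_reduced_grad_diff_le[of y x] norm_triangle_sub[of "reduced_grad y" "reduced_grad x"]
      by (simp add: K_def distrib_right)
    moreover have "y \<in> ball xbar \<epsilon> \<inter> active_subspace xbar" "y \<in> ball xbar \<delta> \<inter> active_subspace xbar"
      using x dist_active_proj_le[of xbar x]
      by (auto simp: y_def dist_commute active_proj_in_active_subspace)
    then have "\<mu> * infdist y (minimizers \<inter> active_subspace xbar) \<le> norm (reduced_grad y)"
      using bound riem_grad_eq_reduced_grad[OF supp] by metis
    ultimately have "infdist y (minimizers \<inter> active_subspace xbar) \<le> K / \<mu> * R"
      using \<mu> by (simp add: pos_le_divide_eq mult.commute)
    moreover have "infdist y minimizers \<le> infdist y (minimizers \<inter> active_subspace xbar)"
      using xbar_min self_in_active_subspace by (intro infdist_mono) auto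
    moreover have "infdist x minimizers \<le> infdist y minimizers + norm (x - y)"
      using infdist_triangle[of x minimizers y] by (simp add: dist_norm)
    ultimately show ?thesis
      using xy by (simp add: C_def R_def algebra_simps)
  qed
  then have "1 / C * infdist x minimizers \<le> norm (prox_residual x)"
    if "x \<in> ball xbar (min \<epsilon> \<delta>)" for x
    using that C by (simp add: pos_divide_le_eq mult.commute)
  then show ?thesis
    using \<epsilon> \<delta> C by (intro exI[of _ "min \<epsilon> \<delta>"] exI[of _ "1 / C"]) auto
qed

end

theorem theorem5:
  fixes g :: "real^'n \<Rightarrow> real" and G :: "real^'n \<Rightarrow> real^'n"
    and L lam t :: real and xbar :: "real^'n"
  assumes grad: "\<forall>x. (g has_derivative (\<lambda>d. G x \<bullet> d)) (at x)"
    and lip: "\<forall>x y. norm (G x - G y) \<le> L * norm (x - y)"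
    and lam: "lam > 0"
    and t: "t > 0"
    and xbar: "xbar \<in> argmin_set (\<lambda>x. g x + lam * l1norm x)"
    and ri: "0 \<in> rel_interior ((\<lambda>v. G xbar + lam *\<^sub>R v) ` convex_subdiff l1norm xbar)"
  shows "(\<exists>\<epsilon> \<mu>. \<epsilon> > 0 \<and> \<mu> > 0 \<and>
            (\<forall>x\<in>ball xbar \<epsilon>.
               \<mu> * infdist x (argmin_set (\<lambda>x. g x + lam * l1norm x))
                 \<le> norm (x - prox t (\<lambda>y. lam * l1norm y) (x - t *\<^sub>R G x))))
     \<longleftrightarrow>
         (\<exists>\<epsilon> \<mu>. \<epsilon> > 0 \<and> \<mu> > 0 \<and>
            (\<forall>x\<in>ball xbar \<epsilon> \<inter> active_subspace xbar.
               \<mu> * infdist x (argmin_set (\<lambda>x. g x + lam * l1norm x) \<inter> active_subspace xbar)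
                 \<le> norm (riem_grad (active_subspace xbar) (\<lambda>x. g x + lam * l1norm x) x)))"
proof -
  interpret l1_regularized g G L lam t xbar
    using assms by unfold_locales
  show ?thesis
    using riem_error_bound_if_prox_error_bound prox_error_bound_if_riem_error_bound by blast
qed

end
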